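(* Let $u$, $\Phi_n=(\varphi_1,\ldots,\varphi_n)$ be a solution of the KdV equation with self-consistent sources of degree $n$, $$u_t+6uu_x+u_{xxx}+4\sum_{j=1}^n\varphi_j\varphi_{j,x}=0,\qquad \varphi_{j,xx}+(\lambda_j+u)\varphi_j=0,\ j=1,\ldots,n,$$ with distinct real constants $\lambda_j$. Let $\lambda_{n+1}\notin\{\lambda_1,\ldots,\lambda_n\}$ and let $f$ be a solution of the Lax system $$\phi_{xx}+(\lambda+u)\phi=0,\qquad \phi_t=A_n(\lambda,u,\Phi_n)\phi \tag{L$_n$}$$ with $\lambda=\lambda_{n+1}$ (belonging to a family $f(x,t;\xi)$ of solutions of (L$_n$) at $\lambda=\xi$ depending smoothly on $\xi$ near $\lambda_{n+1}$, so that $\omega(f,f)$ is defined). Let $e(t)$ be an arbitrary differentiable function and $\sqrt{e'(t)}$ a fixed smooth choice of square root. Define $$\bar\phi=\phi-\frac{f\,\omega(f,\phi)}{e(t)+\omega(f,f)},\quad \bar u=u+2\partial_x^2\ln[e(t)+\omega(f,f)],$$ $$\bar\varphi_j=\varphi_j-\frac{f\,\omega(f,\varphi_j)}{e(t)+\omega(f,f)}\ (j=1,\ldots,n),\qquad \bar\varphi_{n+1}=\frac{\sqrt{e'(t)}\,f}{e(t)+\omega(f,f)} .$$ Then for every solution $\phi$ of (L$_n$) with $\lambda\ne\lambda_{n+1}$, $\bar\phi$ satisfies $$\bar\phi_{xx}+(\lambda+\bar u)\bar\phi=0,\qquad \bar\phi_t=A_{n+1}(\lambda,\bar u,\bar\Phi_{n+1})\bar\phi,$$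 where $\bar\Phi_{n+1}=(\bar\varphi_1,\ldots,\bar\varphi_{n+1})$, and $\bar u,\bar\Phi_{n+1}$ satisfy the KdV equation with sources of degree $n+1$: $$\bar u_t+6\bar u\bar u_x+\bar u_{xxx}+4\sum_{j=1}^{n+1}\bar\varphi_j\bar\varphi_{j,x}=0,\qquad \bar\varphi_{j,xx}+(\lambda_j+\bar u)\bar\varphi_j=0,\ j=1,\ldots,n+1.$$
   Context: $W(g,h)=g h_x-g_x h$ denotes the Wronskian. For a spectral parameter $\lambda$ and $\Phi_m=(\varphi_1,\ldots,\varphi_m)$ with $\varphi_j$ associated to $\lambda_j$, $$A_m(\lambda,u,\Phi_m)\phi=u_x\phi+(4\lambda-2u)\phi_x+\sum_{j=1}^m\frac{\varphi_j}{\lambda_j-\lambda}W(\varphi_j,\phi).$$ If $f$ solves $f_{xx}+(\xi+u)f=0$ and $g$ solves $g_{xx}+(\eta+u)g=0$ with $\eta\neq\xi$, then $\omega(f,g)=\dfrac{W(f,g)}{\xi-\eta}$. If $f=f(x,t;\xi)$ depends smoothly on $\xi$, then $\omega(f,f)=\lim_{\eta\to\xi}\frac{W(f(\xi),f(\eta))}{\xi-\eta}=-W(f,\partial_\xi f)$. All identities are understood on the set where $e(t)+\omega(f,f)\neq0$. *)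

theory Defs
  imports "HOL-Analysis.Analysis"
begin

type_synonym fn2 = "real \<Rightarrow> real \<Rightarrow> real"   (* functions of (x,t) *)

definition px :: "fn2 \<Rightarrow> fn2" where
  "px f = (\<lambda>x t. deriv (\<lambda>y. f y t) x)"

definition pt :: "fn2 \<Rightarrow> fn2" where
  "pt f = (\<lambda>x t. deriv (\<lambda>s. f x s) t)"

fun iter2 :: "bool list \<Rightarrow> fn2 \<Rightarrow> fn2" where
  "iter2 [] f = f"
| "iter2 (b # ws) f = (if b then px else pt) (iter2 ws f)"

definition smooth2 :: "fn2 \<Rightarrow> bool" where
  "smooth2 f \<longleftrightarrow> (\<forall>ws. (\<lambda>p::real \<times> real. iter2 ws f (fst p) (snd p)) differentiable_on UNIV)"

type_synonym fn3 = "real \<Rightarrow> real \<Rightarrow> real \<Rightarrow> real"  (* functions of (xi,x,t) *)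

definition pxi3 :: "fn3 \<Rightarrow> fn3" where
  "pxi3 F = (\<lambda>\<xi> x t. deriv (\<lambda>\<eta>. F \<eta> x t) \<xi>)"
definition px3 :: "fn3 \<Rightarrow> fn3" where
  "px3 F = (\<lambda>\<xi> x t. deriv (\<lambda>y. F \<xi> y t) x)"
definition pt3 :: "fn3 \<Rightarrow> fn3" where
  "pt3 F = (\<lambda>\<xi> x t. deriv (\<lambda>s. F \<xi> x s) t)"

fun iter3 :: "nat list \<Rightarrow> fn3 \<Rightarrow> fn3" where
  "iter3 [] F = F"
| "iter3 (k # ws) F = (if k = 0 then pxi3 else if k = 1 then px3 else pt3) (iter3 ws F)"

definition smooth3_on :: "real set \<Rightarrow> fn3 \<Rightarrow> bool" where
  "smooth3_on S F \<longleftrightarrow>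
     (\<forall>ws. (\<lambda>p::real \<times> real \<times> real. iter3 ws F (fst p) (fst (snd p)) (snd (snd p)))
              differentiable_on (S \<times> UNIV \<times> UNIV))"

definition smooth1 :: "(real \<Rightarrow> real) \<Rightarrow> bool" where
  "smooth1 g \<longleftrightarrow> (\<forall>k t. (deriv ^^ k) g differentiable at t)"

definition Wr :: "fn2 \<Rightarrow> fn2 \<Rightarrow> fn2" where
  "Wr g h = (\<lambda>x t. g x t * px h x t - px g x t * h x t)"

text \<open>A_m(lambda,u,Phi_m) phi, with Phi_m given by Phi j, j = 1..m, and lambda_j = lam j.\<close>
definition Aop :: "nat \<Rightarrow> (nat \<Rightarrow> real) \<Rightarrow> real \<Rightarrow> fn2 \<Rightarrow> (nat \<Rightarrow> fn2) \<Rightarrow> fn2 \<Rightarrow> fn2" where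
  "Aop m lam lm u Phi \<phi> = (\<lambda>x t. px u x t * \<phi> x t + (4 * lm - 2 * u x t) * px \<phi> x t
      + (\<Sum>j = 1..m. Phi j x t / (lam j - lm) * Wr (Phi j) \<phi> x t))"

definition lax_sys_on :: "(real \<times> real) set \<Rightarrow> nat \<Rightarrow> (nat \<Rightarrow> real) \<Rightarrow> fn2 \<Rightarrow> (nat \<Rightarrow> fn2) \<Rightarrow> real \<Rightarrow> fn2 \<Rightarrow> bool" where
  "lax_sys_on U m lam u Phi lm \<phi> \<longleftrightarrow>
     (\<forall>x t. (x, t) \<in> U \<longrightarrow>
        px (px \<phi>) x t + (lm + u x t) * \<phi> x t = 0 \<and>
        pt \<phi> x t = Aop m lam lm u Phi \<phi> x t)"

definition kdvs_on :: "(real \<times> real) set \<Rightarrow> nat \<Rightarrow> (nat \<Rightarrow> real) \<Rightarrow> fn2 \<Rightarrow> (nat \<Rightarrow> fn2) \<Rightarrow> bool" where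
  "kdvs_on U m lam u Phi \<longleftrightarrow>
     (\<forall>x t. (x, t) \<in> U \<longrightarrow>
        pt u x t + 6 * u x t * px u x t + px (px (px u)) x t
          + 4 * (\<Sum>j = 1..m. Phi j x t * px (Phi j) x t) = 0 \<and>
        (\<forall>j \<in> {1..m}. px (px (Phi j)) x t + (lam j + u x t) * Phi j x t = 0))"

end

theory Submission
  imports Defs
begin

text \<open>
  For solutions \<open>a\<close>, \<open>b\<close> of the Lax system at spectral parameters \<open>\<alpha>\<close>, \<open>\<beta>\<close> put
  \<open>\<omega>(a,b) = W(a,b) / (\<alpha> - \<beta>)\<close>. Then \<open>\<omega>(a,b)\<^sub>x = a b\<close>, and the Lax flow gives
  \<open>W(a,b)\<^sub>t = (\<alpha> - \<beta>) (4 a\<^sub>x b\<^sub>x + (4\<alpha> + 4\<beta> + 2u) a b + \<Sum>\<^sub>j \<omega>(\<phi>\<^sub>j,a) \<omega>(\<phi>\<^sub>j,b))\<close>,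
  the source terms combining because \<open>W(\<phi>\<^sub>j,a) = (\<lambda>\<^sub>j - \<alpha>) \<omega>(\<phi>\<^sub>j,a)\<close>. Taking \<open>a = F \<xi>\<close>,
  \<open>b = f = F k\<close> and differentiating in \<open>\<xi>\<close> at \<open>k\<close>, where the Wronskian vanishes, yields the
  derivatives of \<open>D = e + \<omega>(f,f)\<close>: \<open>D\<^sub>x = f\<^sup>2\<close> and
  \<open>D\<^sub>t = e' + 4 f\<^sub>x\<^sup>2 + (8k + 2u) f\<^sup>2 + \<Sum>\<^sub>j \<omega>(\<phi>\<^sub>j,f)\<^sup>2\<close>.

  With these rules, the Schroedinger equations for the transforms \<open>T\<phi> = \<phi> - f \<omega>(f,\<phi>) / D\<close>
  and the Wronskian identity \<open>W(T\<phi>, T\<psi>) = W(\<phi>, \<psi>) - (\<mu> - \<nu>) \<omega>(f,\<phi>) \<omega>(f,\<psi>) / D\<close> are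
  algebraic identities. By the latter, the source terms of the new Lax operator, and likewise
  those of the new KdV equation, match term by term the sums produced by differentiating
  \<open>T\<phi>\<close> and the new potential in \<open>t\<close>; what remains are sum-free polynomial identities in
  \<open>f\<close>, \<open>f\<^sub>x\<close> and \<open>1 / D\<close>.
\<close>

lemma DERIV_ln_abs:
  fixes z :: real
  assumes "z \<noteq> 0"
  shows "((\<lambda>w. ln \<bar>w\<bar>) has_real_derivative 1 / z) (at z)"
proof -
  have "ln (w\<^sup>2) / 2 = ln \<bar>w\<bar>" if "w \<noteq> 0" for w :: real
    using ln_realpow[of "\<bar>w\<bar>" 2] that by simp
  then have ev: "\<forall>\<^sub>F w in nhds z. ln (w\<^sup>2) / 2 = ln \<bar>w\<bar>"
    using t1_space_nhds[OF assms] by (auto elim!: eventually_mono)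
  have "((\<lambda>w. ln (w\<^sup>2) / 2) has_real_derivative 1 / z) (at z)"
    using assms
    by (auto intro!: derivative_eq_intros
        simp: field_simps eval_nat_numeral zero_less_mult_iff linorder_neq_iff)
  then show ?thesis by (rule iffD1[OF DERIV_cong_ev[OF refl ev refl]])
qed

lemma DERIV_mult_root_factor:
  assumes "isCont P k"
  shows "((\<lambda>\<xi>. (\<xi> - k) * P \<xi>) has_real_derivative P k) (at k)"
  unfolding has_field_derivative_iff
proof (rule Lim_transform_eventually)
  show "(P \<longlongrightarrow> P k) (at k)" using assms by (simp add: isCont_def)
  show "\<forall>\<^sub>F \<xi> in at k. P \<xi> = ((\<xi> - k) * P \<xi> - (k - k) * P k) / (\<xi> - k)"
    by (auto simp: eventually_at_filter)
qed

lemma DERIV_unique_root_factor: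
  assumes "open S" "k \<in> S" "\<And>\<xi>. \<xi> \<in> S \<Longrightarrow> H \<xi> = (\<xi> - k) * P \<xi>" "isCont P k"
    and "(H has_real_derivative H') (at k)"
  shows "H' = P k"
proof -
  have "\<forall>\<^sub>F \<xi> in nhds k. (\<xi> - k) * P \<xi> = H \<xi>"
    using eventually_nhds_in_open[OF assms(1,2)] by eventually_elim (simp add: assms(3))
  from DERIV_cong_ev[OF refl this refl] have "(H has_real_derivative P k) (at k)"
    using DERIV_mult_root_factor[OF assms(4)] by simp
  with assms(5) show ?thesis by (rule DERIV_unique)
qed

lemma iter2_append: "iter2 (ws @ vs) h = iter2 ws (iter2 vs h)"
  by (induction ws) auto

lemma smooth2_iter2: "smooth2 h \<Longrightarrow> smooth2 (iter2 vs h)"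
  unfolding smooth2_def by (metis iter2_append)

lemma smooth2_px: "smooth2 h \<Longrightarrow> smooth2 (px h)"
  using smooth2_iter2[of h "[True]"] by simp

lemma smooth2_pt: "smooth2 h \<Longrightarrow> smooth2 (pt h)"
  using smooth2_iter2[of h "[False]"] by simp

lemma smooth2_differentiable:
  "smooth2 h \<Longrightarrow> (\<lambda>p. h (fst p) (snd p)) differentiable (at p)"
  unfolding smooth2_def by (metis differentiable_on_def iter2.simps(1) iso_tuple_UNIV_I)

lemma smooth2_has_px: "smooth2 h \<Longrightarrow> ((\<lambda>y. h y t) has_real_derivative px h x t) (at x)"
  using differentiable_chain_at[of "\<lambda>y. (y, t)" x "\<lambda>p. h (fst p) (snd p)"]
  by (auto simp: px_def o_def DERIV_deriv_iff_real_differentiable smooth2_differentiable)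

lemma smooth2_has_pt: "smooth2 h \<Longrightarrow> ((\<lambda>s. h x s) has_real_derivative pt h x t) (at t)"
  using differentiable_chain_at[of "\<lambda>s. (x, s)" t "\<lambda>p. h (fst p) (snd p)"]
  by (auto simp: pt_def o_def DERIV_deriv_iff_real_differentiable smooth2_differentiable)

lemma px_eqI: "((\<lambda>y. h y t) has_real_derivative c) (at x) \<Longrightarrow> px h x t = c"
  unfolding px_def by (rule DERIV_imp_deriv)

lemma pt_eqI: "((\<lambda>s. h x s) has_real_derivative c) (at t) \<Longrightarrow> pt h x t = c"
  unfolding pt_def by (rule DERIV_imp_deriv)

lemma second_difference_MVT:
  fixes g g1 g12 :: "real \<Rightarrow> real \<Rightarrow> real"
  assumes "0 < h"
    and d1: "\<And>x y. x \<in> {a..a+h} \<Longrightarrow> y \<in> {b..b+h} \<Longrightarrow> ((\<lambda>x. g x y) has_real_derivative g1 x y) (at x)"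
    and d12: "\<And>x y. x \<in> {a..a+h} \<Longrightarrow> y \<in> {b..b+h} \<Longrightarrow> ((\<lambda>y. g1 x y) has_real_derivative g12 x y) (at y)"
  shows "\<exists>\<xi>\<in>{a..a+h}. \<exists>\<eta>\<in>{b..b+h}.
           g (a + h) (b + h) - g (a + h) b - g a (b + h) + g a b = h\<^sup>2 * g12 \<xi> \<eta>"
proof -
  have "\<exists>\<xi>>a. \<xi> < a + h \<and> g (a + h) (b + h) - g (a + h) b - (g a (b + h) - g a b)
      = (a + h - a) * (g1 \<xi> (b + h) - g1 \<xi> b)"
    using \<open>0 < h\<close> by (intro MVT2) (auto intro!: derivative_intros d1)
  then obtain \<xi> where \<xi>: "a < \<xi>" "\<xi> < a + h"
    and "g (a + h) (b + h) - g (a + h) b - (g a (b + h) - g a b) = h * (g1 \<xi> (b + h) - g1 \<xi> b)"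
    by auto
  moreover have "\<exists>\<eta>>b. \<eta> < b + h \<and> g1 \<xi> (b + h) - g1 \<xi> b = (b + h - b) * g12 \<xi> \<eta>"
    using \<open>0 < h\<close> \<xi> by (intro MVT2) (auto intro!: d12)
  then obtain \<eta> where \<eta>: "b < \<eta>" "\<eta> < b + h" "g1 \<xi> (b + h) - g1 \<xi> b = h * g12 \<xi> \<eta>"
    by auto
  ultimately show ?thesis
    by (intro bexI[of _ \<xi>] bexI[of _ \<eta>]) (auto simp: power2_eq_square algebra_simps)
qed

text \<open>Schwarz's theorem: both mixed partials express the same second difference quotient.\<close>

lemma mixed_partials_eq:
  fixes g g1 g2 g12 g21 :: "real \<Rightarrow> real \<Rightarrow> real"
  assumes "open S" "(a, b) \<in> S"
    and d1: "\<And>x y. (x, y) \<in> S \<Longrightarrow> ((\<lambda>x. g x y) has_real_derivative g1 x y) (at x)"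
    and d2: "\<And>x y. (x, y) \<in> S \<Longrightarrow> ((\<lambda>y. g x y) has_real_derivative g2 x y) (at y)"
    and d12: "\<And>x y. (x, y) \<in> S \<Longrightarrow> ((\<lambda>y. g1 x y) has_real_derivative g12 x y) (at y)"
    and d21: "\<And>x y. (x, y) \<in> S \<Longrightarrow> ((\<lambda>x. g2 x y) has_real_derivative g21 x y) (at x)"
    and c12: "isCont (\<lambda>p. g12 (fst p) (snd p)) (a, b)"
    and c21: "isCont (\<lambda>p. g21 (fst p) (snd p)) (a, b)"
  shows "g12 a b = g21 a b"
proof (rule ccontr)
  assume ne: "g12 a b \<noteq> g21 a b"
  define \<epsilon> where "\<epsilon> = \<bar>g12 a b - g21 a b\<bar> / 2"
  have "\<epsilon> > 0" using ne unfolding \<epsilon>_def by simp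
  then obtain r1 r2 r3 where r: "r1 > 0" "r2 > 0" "r3 > 0" "ball (a, b) r3 \<subseteq> S"
    and near12: "\<And>p. dist p (a, b) < r1 \<Longrightarrow> dist (g12 (fst p) (snd p)) (g12 a b) < \<epsilon>"
    and near21: "\<And>p. dist p (a, b) < r2 \<Longrightarrow> dist (g21 (fst p) (snd p)) (g21 a b) < \<epsilon>"
    using c12 c21 \<open>open S\<close> \<open>(a, b) \<in> S\<close> unfolding continuous_at_eps_delta open_contains_ball
    by (metis fst_conv snd_conv)
  define h where "h = Min {r1, r2, r3} / 3"
  have "h > 0" using r unfolding h_def by simp
  have close: "dist (x, y) (a, b) < Min {r1, r2, r3}" if "x \<in> {a..a+h}" "y \<in> {b..b+h}" for x y
  proof -
    have "dist (x, y) (a, b) \<le> \<bar>x - a\<bar> + \<bar>y - b\<bar>"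
      using norm_Pair_le[of "x - a" "y - b"] by (simp add: dist_norm)
    also have "\<dots> < Min {r1, r2, r3}" using that \<open>h > 0\<close> unfolding h_def by auto
    finally show ?thesis .
  qed
  then have inS: "(x, y) \<in> S" if "x \<in> {a..a+h}" "y \<in> {b..b+h}" for x y
    using that r(4) by (force simp: dist_commute)
  obtain \<xi> \<eta> where \<xi>\<eta>: "\<xi> \<in> {a..a+h}" "\<eta> \<in> {b..b+h}"
    and \<Delta>1: "g (a + h) (b + h) - g (a + h) b - g a (b + h) + g a b = h\<^sup>2 * g12 \<xi> \<eta>"
    using second_difference_MVT[of h a b g g1 g12] \<open>h > 0\<close> inS d1 d12 by blast
  obtain \<eta>' \<xi>' where \<xi>\<eta>': "\<eta>' \<in> {b..b+h}" "\<xi>' \<in> {a..a+h}"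
    and \<Delta>2: "g (a + h) (b + h) - g a (b + h) - g (a + h) b + g a b = h\<^sup>2 * g21 \<xi>' \<eta>'"
    using second_difference_MVT[of h b a "\<lambda>y x. g x y" "\<lambda>y x. g2 x y" "\<lambda>y x. g21 x y"]
      \<open>h > 0\<close> inS d2 d21 by blast
  have "h\<^sup>2 * g12 \<xi> \<eta> = h\<^sup>2 * g21 \<xi>' \<eta>'" using \<Delta>1 \<Delta>2 by linarith
  then have "g12 \<xi> \<eta> = g21 \<xi>' \<eta>'" using \<open>h > 0\<close> by simp
  moreover have "dist (g12 \<xi> \<eta>) (g12 a b) < \<epsilon>" "dist (g21 \<xi>' \<eta>') (g21 a b) < \<epsilon>"
    using near12[of "(\<xi>, \<eta>)"] near21[of "(\<xi>', \<eta>')"] close \<xi>\<eta> \<xi>\<eta>' by auto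
  ultimately show False unfolding \<epsilon>_def dist_real_def by (auto simp: abs_if split: if_splits)
qed

lemma smooth2_pt_px: "smooth2 h \<Longrightarrow> pt (px h) x t = px (pt h) x t"
  by (rule mixed_partials_eq[of UNIV x t h "px h" "pt h"])
    (auto intro!: smooth2_has_px smooth2_has_pt smooth2_px smooth2_pt
      intro: differentiable_imp_continuous_within smooth2_differentiable)

lemma iter3_append: "iter3 (ws @ vs) F = iter3 ws (iter3 vs F)"
  by (induction ws) auto

lemma smooth3_on_iter3: "smooth3_on S F \<Longrightarrow> smooth3_on S (iter3 vs F)"
  unfolding smooth3_on_def by (metis iter3_append)

lemma smooth3_on_pxi3: "smooth3_on S F \<Longrightarrow> smooth3_on S (pxi3 F)"
  using smooth3_on_iter3[of S F "[0]"] by simp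

lemma smooth3_on_px3: "smooth3_on S F \<Longrightarrow> smooth3_on S (px3 F)"
  using smooth3_on_iter3[of S F "[1]"] by simp

lemma smooth3_on_pt3: "smooth3_on S F \<Longrightarrow> smooth3_on S (pt3 F)"
  using smooth3_on_iter3[of S F "[2]"] by simp

lemma smooth3_on_subset: "smooth3_on S F \<Longrightarrow> T \<subseteq> S \<Longrightarrow> smooth3_on T F"
  unfolding smooth3_on_def by (meson differentiable_on_subset order_refl Sigma_mono)

lemma smooth3_on_differentiable:
  assumes "open S" "smooth3_on S F" "\<xi> \<in> S"
  shows "(\<lambda>p. F (fst p) (fst (snd p)) (snd (snd p))) differentiable (at (\<xi>, x, t))"
proof -
  have "open (S \<times> (UNIV :: real set) \<times> (UNIV :: real set))"
    using assms(1) by (intro open_Times) auto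
  moreover have "(\<lambda>p. F (fst p) (fst (snd p)) (snd (snd p))) differentiable_on S \<times> UNIV \<times> UNIV"
    using assms(2) iter3.simps(1) unfolding smooth3_on_def by metis
  ultimately show ?thesis
    using assms(3) differentiable_on_eq_differentiable_at by blast
qed

lemma smooth3_on_has_pxi3:
  assumes "open S" "smooth3_on S F" "\<xi> \<in> S"
  shows "((\<lambda>\<eta>. F \<eta> x t) has_real_derivative pxi3 F \<xi> x t) (at \<xi>)"
proof -
  have "((\<lambda>p. F (fst p) (fst (snd p)) (snd (snd p))) \<circ> (\<lambda>\<eta>. (\<eta>, x, t))) differentiable (at \<xi>)"
    using assms by (intro differentiable_chain_at smooth3_on_differentiable) auto
  then show ?thesis
    by (simp add: pxi3_def o_def DERIV_deriv_iff_real_differentiable)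
qed

lemma smooth3_on_has_px3:
  assumes "open S" "smooth3_on S F" "\<xi> \<in> S"
  shows "((\<lambda>y. F \<xi> y t) has_real_derivative px3 F \<xi> x t) (at x)"
proof -
  have "((\<lambda>p. F (fst p) (fst (snd p)) (snd (snd p))) \<circ> (\<lambda>y. (\<xi>, y, t))) differentiable (at x)"
    using assms by (intro differentiable_chain_at smooth3_on_differentiable) auto
  then show ?thesis
    by (simp add: px3_def o_def DERIV_deriv_iff_real_differentiable)
qed

lemma smooth3_on_has_pt3:
  assumes "open S" "smooth3_on S F" "\<xi> \<in> S"
  shows "((\<lambda>s. F \<xi> x s) has_real_derivative pt3 F \<xi> x t) (at t)"
proof -
  have "((\<lambda>p. F (fst p) (fst (snd p)) (snd (snd p))) \<circ> (\<lambda>s. (\<xi>, x, s))) differentiable (at t)"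
    using assms by (intro differentiable_chain_at smooth3_on_differentiable) auto
  then show ?thesis
    by (simp add: pt3_def o_def DERIV_deriv_iff_real_differentiable)
qed

lemma iter2_section: "iter2 ws (F \<xi>) = iter3 (map (\<lambda>b. if b then 1 else 2) ws) F \<xi>"
  by (induction ws) (auto simp: px_def px3_def pt_def pt3_def)

lemma smooth3_on_section:
  assumes "open S" "smooth3_on S F" "\<xi> \<in> S"
  shows "smooth2 (F \<xi>)"
  unfolding smooth2_def iter2_section
proof (intro allI differentiable_at_imp_differentiable_on)
  fix ws and p :: "real \<times> real"
  let ?G = "iter3 (map (\<lambda>b. if b then 1 else 2) ws) F"
  have "(\<lambda>q. ?G (fst q) (fst (snd q)) (snd (snd q))) differentiable (at (\<xi>, fst p, snd p))"
    using assms by (intro smooth3_on_differentiable smooth3_on_iter3)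
  then have "((\<lambda>q. ?G (fst q) (fst (snd q)) (snd (snd q))) \<circ> (\<lambda>p. (\<xi>, fst p, snd p)))
      differentiable (at p)"
    by (intro differentiable_chain_at) (auto intro!: derivative_intros)
  then show "(\<lambda>p. ?G \<xi> (fst p) (snd p)) differentiable (at p)" by (simp add: o_def)
qed

lemma px_section: "px (F \<xi>) = px3 F \<xi>"
  by (simp add: px_def px3_def fun_eq_iff)

lemma pt_section: "pt (F \<xi>) = pt3 F \<xi>"
  by (simp add: pt_def pt3_def fun_eq_iff)

lemma px3_cong: "(\<And>y. G \<xi> y t = H \<xi> y t) \<Longrightarrow> px3 G \<xi> x t = px3 H \<xi> x t"
  by (simp add: px3_def)

lemma pt3_cong: "(\<And>s. G \<xi> x s = H \<xi> x s) \<Longrightarrow> pt3 G \<xi> x t = pt3 H \<xi> x t"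
  unfolding pt3_def by metis

lemma pxi3_px3_commute:
  assumes "open S" "smooth3_on S F" "\<xi> \<in> S"
  shows "pxi3 (px3 F) \<xi> x t = px3 (pxi3 F) \<xi> x t"
proof -
  have cont: "isCont (\<lambda>p. G (fst p) (snd p) t) (\<xi>, x)" if "smooth3_on S G" for G
    using continuous_at_compose[of "(\<xi>, x)" "\<lambda>p. (fst p, snd p, t)"
        "\<lambda>q. G (fst q) (fst (snd q)) (snd (snd q))"]
      differentiable_imp_continuous_within[OF smooth3_on_differentiable[OF assms(1) that assms(3)]]
    by (simp add: o_def continuous_intros)
  have "px3 (pxi3 F) \<xi> x t = pxi3 (px3 F) \<xi> x t"
  proof (rule mixed_partials_eq[of "S \<times> UNIV" \<xi> x "\<lambda>a b. F a b t" "\<lambda>a b. pxi3 F a b t"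
        "\<lambda>a b. px3 F a b t" "\<lambda>a b. px3 (pxi3 F) a b t" "\<lambda>a b. pxi3 (px3 F) a b t"])
    show "open (S \<times> (UNIV :: real set))" using assms(1) by (intro open_Times) auto
    show "isCont (\<lambda>p. px3 (pxi3 F) (fst p) (snd p) t) (\<xi>, x)"
      using assms(2) by (intro cont smooth3_on_px3 smooth3_on_pxi3)
    show "isCont (\<lambda>p. pxi3 (px3 F) (fst p) (snd p) t) (\<xi>, x)"
      using assms(2) by (intro cont smooth3_on_px3 smooth3_on_pxi3)
    fix a b assume "(a, b) \<in> S \<times> (UNIV :: real set)"
    then have "a \<in> S" by simp
    show "((\<lambda>a. F a b t) has_real_derivative pxi3 F a b t) (at a)"
      by (rule smooth3_on_has_pxi3[OF assms(1,2) \<open>a \<in> S\<close>])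
    show "((\<lambda>b. F a b t) has_real_derivative px3 F a b t) (at b)"
      by (rule smooth3_on_has_px3[OF assms(1,2) \<open>a \<in> S\<close>])
    show "((\<lambda>b. pxi3 F a b t) has_real_derivative px3 (pxi3 F) a b t) (at b)"
      by (rule smooth3_on_has_px3[OF assms(1) smooth3_on_pxi3[OF assms(2)] \<open>a \<in> S\<close>])
    show "((\<lambda>a. px3 F a b t) has_real_derivative pxi3 (px3 F) a b t) (at a)"
      by (rule smooth3_on_has_pxi3[OF assms(1) smooth3_on_px3[OF assms(2)] \<open>a \<in> S\<close>])
  qed (use assms(3) in simp)
  then show ?thesis ..
qed

lemma pxi3_pt3_commute:
  assumes "open S" "smooth3_on S F" "\<xi> \<in> S"
  shows "pxi3 (pt3 F) \<xi> x t = pt3 (pxi3 F) \<xi> x t"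
proof -
  have cont: "isCont (\<lambda>p. G (fst p) x (snd p)) (\<xi>, t)" if "smooth3_on S G" for G
    using continuous_at_compose[of "(\<xi>, t)" "\<lambda>p. (fst p, x, snd p)"
        "\<lambda>q. G (fst q) (fst (snd q)) (snd (snd q))"]
      differentiable_imp_continuous_within[OF smooth3_on_differentiable[OF assms(1) that assms(3)]]
    by (simp add: o_def continuous_intros)
  have "pt3 (pxi3 F) \<xi> x t = pxi3 (pt3 F) \<xi> x t"
  proof (rule mixed_partials_eq[of "S \<times> UNIV" \<xi> t "\<lambda>a b. F a x b" "\<lambda>a b. pxi3 F a x b"
        "\<lambda>a b. pt3 F a x b" "\<lambda>a b. pt3 (pxi3 F) a x b" "\<lambda>a b. pxi3 (pt3 F) a x b"])
    show "open (S \<times> (UNIV :: real set))" using assms(1) by (intro open_Times) auto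
    show "isCont (\<lambda>p. pt3 (pxi3 F) (fst p) x (snd p)) (\<xi>, t)"
      using assms(2) by (intro cont smooth3_on_pt3 smooth3_on_pxi3)
    show "isCont (\<lambda>p. pxi3 (pt3 F) (fst p) x (snd p)) (\<xi>, t)"
      using assms(2) by (intro cont smooth3_on_pt3 smooth3_on_pxi3)
    fix a b assume "(a, b) \<in> S \<times> (UNIV :: real set)"
    then have "a \<in> S" by simp
    show "((\<lambda>a. F a x b) has_real_derivative pxi3 F a x b) (at a)"
      by (rule smooth3_on_has_pxi3[OF assms(1,2) \<open>a \<in> S\<close>])
    show "((\<lambda>b. F a x b) has_real_derivative pt3 F a x b) (at b)"
      by (rule smooth3_on_has_pt3[OF assms(1,2) \<open>a \<in> S\<close>])
    show "((\<lambda>b. pxi3 F a x b) has_real_derivative pt3 (pxi3 F) a x b) (at b)"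
      by (rule smooth3_on_has_pt3[OF assms(1) smooth3_on_pxi3[OF assms(2)] \<open>a \<in> S\<close>])
    show "((\<lambda>a. pt3 F a x b) has_real_derivative pxi3 (pt3 F) a x b) (at a)"
      by (rule smooth3_on_has_pxi3[OF assms(1) smooth3_on_pt3[OF assms(2)] \<open>a \<in> S\<close>])
  qed (use assms(3) in simp)
  then show ?thesis ..
qed

lemma pxi3_section_commute:
  assumes "open S" "smooth3_on S F" "\<xi> \<in> S"
  shows "pxi3 (px3 F) \<xi> x t = px (pxi3 F \<xi>) x t"
    and "pxi3 (pt3 F) \<xi> x t = pt (pxi3 F \<xi>) x t"
    and "pxi3 (px3 (px3 F)) \<xi> x t = px (px (pxi3 F \<xi>)) x t"
    and "pxi3 (pt3 (px3 F)) \<xi> x t = pt (px (pxi3 F \<xi>)) x t"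
proof -
  note c = pxi3_px3_commute[OF assms] pxi3_pt3_commute[OF assms]
    pxi3_px3_commute[OF assms(1) smooth3_on_px3[OF assms(2)] assms(3)]
    pxi3_pt3_commute[OF assms(1) smooth3_on_px3[OF assms(2)] assms(3)]
  show "pxi3 (px3 F) \<xi> x t = px (pxi3 F \<xi>) x t"
    unfolding px_section by (rule c(1))
  show "pxi3 (pt3 F) \<xi> x t = pt (pxi3 F \<xi>) x t"
    unfolding pt_section by (rule c(2))
  show "pxi3 (px3 (px3 F)) \<xi> x t = px (px (pxi3 F \<xi>)) x t"
    unfolding px_section c(3) by (rule px3_cong) (rule c(1))
  show "pxi3 (pt3 (px3 F)) \<xi> x t = pt (px (pxi3 F \<xi>)) x t"
    unfolding px_section pt_section c(4) by (rule pt3_cong) (rule c(1))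
qed

section \<open>Wronskians of Schroedinger eigenfunctions\<close>

definition omega :: "real \<Rightarrow> fn2 \<Rightarrow> real \<Rightarrow> fn2 \<Rightarrow> fn2" where
  "omega la a lb b = (\<lambda>x t. Wr a b x t / (la - lb))"

lemma omega_commute: "omega la a lb b = omega lb b la a"
proof (intro ext)
  fix x t
  have "Wr b a x t = - Wr a b x t" by (simp add: Wr_def)
  then show "omega la a lb b x t = omega lb b la a x t"
    using divide_minus_right[of "Wr a b x t" "lb - la"] by (simp add: omega_def)
qed

lemma Wr_has_px:
  assumes "smooth2 a" "smooth2 b"
  shows "((\<lambda>y. Wr a b y t) has_real_derivative a x t * px (px b) x t - px (px a) x t * b x t) (at x)"
  unfolding Wr_def
  by (auto intro!: derivative_eq_intros assms[THEN smooth2_has_px]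
      assms[THEN smooth2_px, THEN smooth2_has_px] simp: algebra_simps)

lemma Wr_has_pt:
  assumes "smooth2 a" "smooth2 b"
  shows "((\<lambda>s. Wr a b x s) has_real_derivative
    pt a x t * px b x t + a x t * pt (px b) x t - pt (px a) x t * b x t - px a x t * pt b x t) (at t)"
  unfolding Wr_def
  by (auto intro!: derivative_eq_intros assms[THEN smooth2_has_pt]
      assms[THEN smooth2_px, THEN smooth2_has_pt] simp: algebra_simps)

lemma omega_has_px:
  assumes "smooth2 a" "smooth2 b" "la \<noteq> lb"
    and "px (px a) x t = - (la + c) * a x t" "px (px b) x t = - (lb + c) * b x t"
  shows "((\<lambda>y. omega la a lb b y t) has_real_derivative a x t * b x t) (at x)"
proof -
  have "((\<lambda>y. Wr a b y t / (la - lb)) has_real_derivative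
      (a x t * px (px b) x t - px (px a) x t * b x t) / (la - lb)) (at x)"
    using Wr_has_px[OF assms(1,2)] by (rule DERIV_cdivide)
  moreover have "(a x t * px (px b) x t - px (px a) x t * b x t) / (la - lb) = a x t * b x t"
    using assms(3) unfolding assms(4,5) by (simp add: field_simps)
  ultimately show ?thesis by (simp add: omega_def)
qed

section \<open>The Lax pair of the KdV equation with sources\<close>

locale kdv_sources =
  fixes n :: nat and lam :: "nat \<Rightarrow> real" and u :: fn2 and Phi :: "nat \<Rightarrow> fn2"
  assumes u_smooth: "smooth2 u"
    and Phi_smooth: "\<And>j. j \<in> {1..n} \<Longrightarrow> smooth2 (Phi j)"
    and kdvs: "kdvs_on UNIV n lam u Phi"
begin

definition eigenfunction :: "real \<Rightarrow> fn2 \<Rightarrow> bool" where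
  "eigenfunction \<mu> h \<longleftrightarrow> smooth2 h \<and> \<mu> \<notin> lam ` {1..n} \<and> lax_sys_on UNIV n lam u Phi \<mu> h"

lemma eigenfunction_smooth: "eigenfunction \<mu> h \<Longrightarrow> smooth2 h"
  by (simp add: eigenfunction_def)

lemma pt_u:
  "pt u x t = - (6 * u x t * px u x t + px (px (px u)) x t
     + 4 * (\<Sum>j = 1..n. Phi j x t * px (Phi j) x t))"
  using kdvs unfolding kdvs_on_def by (simp add: eq_neg_iff_add_eq_0 algebra_simps)

lemma px_px_Phi:
  assumes "j \<in> {1..n}"
  shows "px (px (Phi j)) x t = - (lam j + u x t) * Phi j x t"
proof -
  have "px (px (Phi j)) x t + (lam j + u x t) * Phi j x t = 0"
    using kdvs assms unfolding kdvs_on_def by blast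
  then show ?thesis by (metis eq_neg_iff_add_eq_0 mult_minus_left)
qed

lemma eigenfunction_px_px:
  assumes "eigenfunction \<mu> h"
  shows "px (px h) x t = - (\<mu> + u x t) * h x t"
proof -
  have "px (px h) x t + (\<mu> + u x t) * h x t = 0"
    using assms unfolding eigenfunction_def lax_sys_on_def by blast
  then show ?thesis by (metis eq_neg_iff_add_eq_0 mult_minus_left)
qed

lemma eigenfunction_pt:
  "eigenfunction \<mu> h \<Longrightarrow> pt h x t = px u x t * h x t + (4 * \<mu> - 2 * u x t) * px h x t
     + (\<Sum>j = 1..n. Phi j x t * omega (lam j) (Phi j) \<mu> h x t)"
  unfolding eigenfunction_def lax_sys_on_def Aop_def omega_def by simp

lemma eigenfunction_pt_px:
  assumes h: "eigenfunction \<mu> h"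
  shows "pt (px h) x t = px (px u) x t * h x t - px u x t * px h x t
      - (4 * \<mu> - 2 * u x t) * (\<mu> + u x t) * h x t
      + (\<Sum>j = 1..n. px (Phi j) x t * omega (lam j) (Phi j) \<mu> h x t + (Phi j x t)\<^sup>2 * h x t)"
proof -
  have sm: "smooth2 h" and \<mu>: "\<mu> \<notin> lam ` {1..n}" using h by (auto simp: eigenfunction_def)
  define S where "S y = (\<Sum>j = 1..n. Phi j y t * omega (lam j) (Phi j) \<mu> h y t)" for y
  have "(S has_real_derivative
      (\<Sum>j = 1..n. px (Phi j) x t * omega (lam j) (Phi j) \<mu> h x t + (Phi j x t)\<^sup>2 * h x t)) (at x)"
    unfolding S_def
  proof (rule DERIV_sum)
    fix j assume j: "j \<in> {1..n}"
    have "((\<lambda>y. omega (lam j) (Phi j) \<mu> h y t) has_real_derivative Phi j x t * h x t) (at x)"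
      using j \<mu> by (intro omega_has_px[where c = "u x t"] Phi_smooth sm px_px_Phi
          eigenfunction_px_px h) auto
    then show "((\<lambda>y. Phi j y t * omega (lam j) (Phi j) \<mu> h y t) has_real_derivative
        px (Phi j) x t * omega (lam j) (Phi j) \<mu> h x t + (Phi j x t)\<^sup>2 * h x t) (at x)"
      by (auto intro!: derivative_eq_intros smooth2_has_px Phi_smooth j simp: power2_eq_square)
  qed
  moreover have "pt h y t = px u y t * h y t + (4 * \<mu> - 2 * u y t) * px h y t + S y" for y
    unfolding S_def by (rule eigenfunction_pt[OF h])
  ultimately have "((\<lambda>y. pt h y t) has_real_derivative px (px u) x t * h x t + px u x t * px h x t
      - 2 * px u x t * px h x t + (4 * \<mu> - 2 * u x t) * px (px h) x t
      + (\<Sum>j = 1..n. px (Phi j) x t * omega (lam j) (Phi j) \<mu> h x t + (Phi j x t)\<^sup>2 * h x t)) (at x)"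
    by (auto intro!: derivative_eq_intros smooth2_has_px sm u_smooth
        smooth2_px[OF sm] smooth2_px[OF u_smooth])
  then have "px (pt h) x t = px (px u) x t * h x t - px u x t * px h x t
      - (4 * \<mu> - 2 * u x t) * (\<mu> + u x t) * h x t
      + (\<Sum>j = 1..n. px (Phi j) x t * omega (lam j) (Phi j) \<mu> h x t + (Phi j x t)\<^sup>2 * h x t)"
    by (intro px_eqI) (simp add: eigenfunction_px_px[OF h] algebra_simps)
  then show ?thesis by (simp add: smooth2_pt_px[OF sm])
qed

lemma sources_Wr_pt:
  assumes a: "eigenfunction la a" and b: "eigenfunction lb b"
  shows "px b x t * (\<Sum>j = 1..n. Phi j x t * omega (lam j) (Phi j) la a x t)
      + a x t * (\<Sum>j = 1..n. px (Phi j) x t * omega (lam j) (Phi j) lb b x t + (Phi j x t)\<^sup>2 * b x t)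
      - b x t * (\<Sum>j = 1..n. px (Phi j) x t * omega (lam j) (Phi j) la a x t + (Phi j x t)\<^sup>2 * a x t)
      - px a x t * (\<Sum>j = 1..n. Phi j x t * omega (lam j) (Phi j) lb b x t)
    = (la - lb) * (\<Sum>j = 1..n. omega (lam j) (Phi j) la a x t * omega (lam j) (Phi j) lb b x t)"
    (is "?lhs = _")
proof -
  define \<omega>a where "\<omega>a j = omega (lam j) (Phi j) la a x t" for j
  define \<omega>b where "\<omega>b j = omega (lam j) (Phi j) lb b x t" for j
  have "?lhs = (\<Sum>j = 1..n. px b x t * (Phi j x t * \<omega>a j)
      + a x t * (px (Phi j) x t * \<omega>b j + (Phi j x t)\<^sup>2 * b x t)
      - b x t * (px (Phi j) x t * \<omega>a j + (Phi j x t)\<^sup>2 * a x t)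
      - px a x t * (Phi j x t * \<omega>b j))"
    by (simp add: \<omega>a_def \<omega>b_def sum_distrib_left distrib_left sum.distrib sum_subtractf ac_simps)
  also have "\<dots> = (\<Sum>j = 1..n. (la - lb) * (\<omega>a j * \<omega>b j))"
  proof (rule sum.cong)
    fix j assume "j \<in> {1..n}"
    then have "(lam j - la) * \<omega>a j = Phi j x t * px a x t - px (Phi j) x t * a x t"
      "(lam j - lb) * \<omega>b j = Phi j x t * px b x t - px (Phi j) x t * b x t"
      using a b by (auto simp: eigenfunction_def \<omega>a_def \<omega>b_def omega_def Wr_def)
    then show "px b x t * (Phi j x t * \<omega>a j)
        + a x t * (px (Phi j) x t * \<omega>b j + (Phi j x t)\<^sup>2 * b x t)
        - b x t * (px (Phi j) x t * \<omega>a j + (Phi j x t)\<^sup>2 * a x t)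
        - px a x t * (Phi j x t * \<omega>b j) = (la - lb) * (\<omega>a j * \<omega>b j)"
      by algebra
  qed simp
  finally show ?thesis by (simp add: \<omega>a_def \<omega>b_def sum_distrib_left)
qed

lemma Wr_has_pt_eigenfunction:
  assumes a: "eigenfunction la a" and b: "eigenfunction lb b"
  shows "((\<lambda>s. Wr a b x s) has_real_derivative (la - lb) * (4 * px a x t * px b x t
      + (4 * la + 4 * lb + 2 * u x t) * a x t * b x t
      + (\<Sum>j = 1..n. omega (lam j) (Phi j) la a x t * omega (lam j) (Phi j) lb b x t))) (at t)"
proof -
  have "pt a x t * px b x t + a x t * pt (px b) x t - pt (px a) x t * b x t - px a x t * pt b x t
    = (la - lb) * (4 * px a x t * px b x t + (4 * la + 4 * lb + 2 * u x t) * a x t * b x t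
      + (\<Sum>j = 1..n. omega (lam j) (Phi j) la a x t * omega (lam j) (Phi j) lb b x t))"
    unfolding eigenfunction_pt[OF a] eigenfunction_pt[OF b] eigenfunction_pt_px[OF a]
      eigenfunction_pt_px[OF b]
    using sources_Wr_pt[OF a b, of x t] by algebra
  with Wr_has_pt[OF eigenfunction_smooth[OF a] eigenfunction_smooth[OF b], of x t] show ?thesis
    by simp
qed
end

section \<open>Differentiating a family of eigenfunctions in the spectral parameter\<close>

context kdv_sources
begin

lemma eigenfunction_family_nhd:
  assumes "smooth3_on (ball k \<delta>) F" "\<delta> > 0" "k \<notin> lam ` {1..n}"
    and "\<forall>\<xi> \<in> ball k \<delta>. \<xi> \<notin> lam ` {1..n} \<longrightarrow> smooth2 (F \<xi>) \<and> lax_sys_on UNIV n lam u Phi \<xi> (F \<xi>)"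
  obtains S where "open S" "k \<in> S" "smooth3_on S F" "\<And>\<xi>. \<xi> \<in> S \<Longrightarrow> eigenfunction \<xi> (F \<xi>)"
proof
  show "open (ball k \<delta> - lam ` {1..n})" by (intro open_Diff finite_imp_closed) auto
  show "smooth3_on (ball k \<delta> - lam ` {1..n}) F" using assms(1) by (rule smooth3_on_subset) auto
qed (use assms in \<open>auto simp: eigenfunction_def\<close>)

context
  fixes S :: "real set" and F :: fn3 and k :: real
  assumes S: "open S" "k \<in> S" and F: "smooth3_on S F"
    and eigen: "\<And>\<xi>. \<xi> \<in> S \<Longrightarrow> eigenfunction \<xi> (F \<xi>)"
begin

lemma family_px_px_pxi3: "px (px (pxi3 F k)) x t = - F k x t - (k + u x t) * pxi3 F k x t"
proof -
  define H where "H \<xi> = px3 (px3 F) \<xi> x t + (\<xi> + u x t) * F \<xi> x t" for \<xi>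
  have "H \<xi> = (\<xi> - k) * 0" if "\<xi> \<in> S" for \<xi>
    using eigenfunction_px_px[OF eigen[OF that], of x t]
    by (simp add: H_def px_section algebra_simps)
  moreover have "(H has_real_derivative
      pxi3 (px3 (px3 F)) k x t + (F k x t + (k + u x t) * pxi3 F k x t)) (at k)"
    unfolding H_def
    by (rule derivative_eq_intros refl smooth3_on_has_pxi3[OF S(1) F S(2)]
        smooth3_on_has_pxi3[OF S(1) smooth3_on_px3[OF smooth3_on_px3[OF F]] S(2)])+ simp
  ultimately have "pxi3 (px3 (px3 F)) k x t + (F k x t + (k + u x t) * pxi3 F k x t) = 0"
    using DERIV_unique_root_factor[OF S, of H "\<lambda>_. 0"] by simp
  then show ?thesis
    unfolding pxi3_section_commute[OF S(1) F S(2)] by (simp add: algebra_simps)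
qed

lemma omega_self_has_px:
  "((\<lambda>y. - Wr (F k) (pxi3 F k) y t) has_real_derivative (F k x t)\<^sup>2) (at x)"
proof -
  have "((\<lambda>y. Wr (pxi3 F k) (F k) y t) has_real_derivative
      pxi3 F k x t * px (px (F k)) x t - px (px (pxi3 F k)) x t * F k x t) (at x)"
    by (rule Wr_has_px[OF smooth3_on_section[OF S(1) smooth3_on_pxi3[OF F] S(2)]
          smooth3_on_section[OF S(1) F S(2)]])
  moreover have "Wr (pxi3 F k) (F k) y t = - Wr (F k) (pxi3 F k) y t" for y
    by (simp add: Wr_def)
  moreover have "pxi3 F k x t * px (px (F k)) x t - px (px (pxi3 F k)) x t * F k x t = (F k x t)\<^sup>2"
    unfolding family_px_px_pxi3 eigenfunction_px_px[OF eigen[OF S(2)]] by algebra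
  ultimately show ?thesis by simp
qed

lemma pxi3_pt_Wr:
  "((\<lambda>\<xi>. pt3 F \<xi> x t * px (F k) x t + F \<xi> x t * pt (px (F k)) x t
      - pt3 (px3 F) \<xi> x t * F k x t - px3 F \<xi> x t * pt (F k) x t)
    has_real_derivative pt (Wr (pxi3 F k) (F k)) x t) (at k)"
proof -
  have pt_Wr: "pt (Wr (pxi3 F k) (F k)) x t = pt (pxi3 F k) x t * px (F k) x t
      + pxi3 F k x t * pt (px (F k)) x t - pt (px (pxi3 F k)) x t * F k x t
      - px (pxi3 F k) x t * pt (F k) x t"
    by (rule pt_eqI[of "Wr (pxi3 F k) (F k)", OF Wr_has_pt[OF
          smooth3_on_section[OF S(1) smooth3_on_pxi3[OF F] S(2)]
          smooth3_on_section[OF S(1) F S(2)]]])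
  show ?thesis
    unfolding pt_Wr pxi3_section_commute[OF S(1) F S(2), symmetric]
    by (rule derivative_eq_intros refl smooth3_on_has_pxi3[OF S(1) F S(2)]
        smooth3_on_has_pxi3[OF S(1) smooth3_on_px3[OF F] S(2)]
        smooth3_on_has_pxi3[OF S(1) smooth3_on_pt3[OF F] S(2)]
        smooth3_on_has_pxi3[OF S(1) smooth3_on_pt3[OF smooth3_on_px3[OF F]] S(2)])+ simp
qed

text \<open>By \<open>Wr_has_pt_eigenfunction\<close>, the time derivative of \<open>Wr (F \<xi>) (F k)\<close> has the form
  \<open>(\<xi> - k) * P \<xi>\<close>; its \<open>\<xi>\<close>-derivative at \<open>k\<close> is therefore \<open>P k\<close>.\<close>

lemma pt_Wr_pxi3:
  "pt (Wr (pxi3 F k) (F k)) x t = 4 * (px (F k) x t)\<^sup>2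
      + (8 * k + 2 * u x t) * (F k x t)\<^sup>2 + (\<Sum>j = 1..n. (omega (lam j) (Phi j) k (F k) x t)\<^sup>2)"
proof -
  define P where "P \<xi> = 4 * px (F \<xi>) x t * px (F k) x t
      + (4 * \<xi> + 4 * k + 2 * u x t) * F \<xi> x t * F k x t
      + (\<Sum>j = 1..n. omega (lam j) (Phi j) \<xi> (F \<xi>) x t * omega (lam j) (Phi j) k (F k) x t)" for \<xi>
  have "pt3 F \<xi> x t * px (F k) x t + F \<xi> x t * pt (px (F k)) x t
      - pt3 (px3 F) \<xi> x t * F k x t - px3 F \<xi> x t * pt (F k) x t = (\<xi> - k) * P \<xi>"
    if "\<xi> \<in> S" for \<xi>
  proof -
    have sF: "smooth2 (F \<xi>)" "smooth2 (F k)"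
      using smooth3_on_section[OF S(1) F] that S(2) by auto
    show ?thesis
      using pt_eqI[of "Wr (F \<xi>) (F k)", OF Wr_has_pt[OF sF]]
        pt_eqI[of "Wr (F \<xi>) (F k)", OF Wr_has_pt_eigenfunction[OF eigen[OF that] eigen[OF S(2)]]]
      by (simp add: P_def px_section pt_section)
  qed
  moreover have "isCont P k"
  proof -
    have "lam j \<noteq> k" if "j \<in> {1..n}" for j
      using eigen[OF S(2)] that by (auto simp: eigenfunction_def)
    moreover have "isCont (\<lambda>\<xi>. F \<xi> x t) k" "isCont (\<lambda>\<xi>. px3 F \<xi> x t) k"
      by (rule DERIV_isCont[OF smooth3_on_has_pxi3[OF S(1) F S(2)]],
          rule DERIV_isCont[OF smooth3_on_has_pxi3[OF S(1) smooth3_on_px3[OF F] S(2)]])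
    ultimately show ?thesis
      unfolding P_def omega_def Wr_def px_section by (intro continuous_intros) auto
  qed
  ultimately have "pt (Wr (pxi3 F k) (F k)) x t = P k"
    by (rule DERIV_unique_root_factor[OF S _ _ pxi3_pt_Wr])
  then show ?thesis
    by (simp add: P_def power2_eq_square algebra_simps)
qed

lemma omega_self_has_pt:
  "((\<lambda>s. - Wr (F k) (pxi3 F k) x s) has_real_derivative 4 * (px (F k) x t)\<^sup>2
      + (8 * k + 2 * u x t) * (F k x t)\<^sup>2
      + (\<Sum>j = 1..n. (omega (lam j) (Phi j) k (F k) x t)\<^sup>2)) (at t)"
proof -
  have "Wr (pxi3 F k) (F k) x s = - Wr (F k) (pxi3 F k) x s" for s
    by (simp add: Wr_def)
  then show ?thesis
    using Wr_has_pt[OF smooth3_on_section[OF S(1) smooth3_on_pxi3[OF F] S(2)]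
        smooth3_on_section[OF S(1) F S(2)], of x t] pt_Wr_pxi3[of x t]
    by (simp add: pt_eqI)
qed

end

end

section \<open>The binary Darboux transformation\<close>

text \<open>\<open>Om\<close> plays the role of \<open>\<omega>(f,f) = - Wr f (pxi3 F k)\<close> for a family \<open>F\<close> with \<open>F k = f\<close>;
  only its two derivatives are used.\<close>

locale binary_darboux = kdv_sources +
  fixes f Om :: fn2 and e s :: "real \<Rightarrow> real"
  assumes f_eigen: "eigenfunction (lam (Suc n)) f"
    and Om_has_px: "\<And>x t. ((\<lambda>y. Om y t) has_real_derivative (f x t)\<^sup>2) (at x)"
    and Om_has_pt: "\<And>x t. ((\<lambda>r. Om x r) has_real_derivative 4 * (px f x t)\<^sup>2
      + (8 * lam (Suc n) + 2 * u x t) * (f x t)\<^sup>2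
      + (\<Sum>j = 1..n. (omega (lam j) (Phi j) (lam (Suc n)) f x t)\<^sup>2)) (at t)"
    and e_has_deriv: "\<And>t. (e has_real_derivative (s t)\<^sup>2) (at t)"
begin

abbreviation k :: real where "k \<equiv> lam (Suc n)"

definition D :: fn2 where "D = (\<lambda>x t. e t + Om x t)"

definition ubar :: fn2 where "ubar = (\<lambda>x t. u x t + 2 * px (px (\<lambda>y r. ln \<bar>D y r\<bar>)) x t)"

text \<open>The potential \<open>w\<close> is a parameter: besides \<open>w = omega k f \<mu> h\<close>, the choice \<open>h = s f\<close>,
  \<open>w = s (D - 1)\<close> also covers \<open>Phibar (Suc n) = s f / D\<close>.\<close>

definition darboux :: "fn2 \<Rightarrow> fn2 \<Rightarrow> fn2" where
  "darboux w h = (\<lambda>x t. h x t - f x t * w x t / D x t)"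

definition Phibar :: "nat \<Rightarrow> fn2" where
  "Phibar j = (if j = Suc n then (\<lambda>x t. s t * f x t / D x t)
     else darboux (omega k f (lam j) (Phi j)) (Phi j))"

lemma f_smooth: "smooth2 f"
  using f_eigen by (simp add: eigenfunction_def)

lemma lam_ne_k: "j \<in> {1..n} \<Longrightarrow> lam j \<noteq> k"
  by (metis eigenfunction_def f_eigen imageI)

lemma D_has_px: "((\<lambda>y. D y t) has_real_derivative (f x t)\<^sup>2) (at x)"
  unfolding D_def by (rule derivative_eq_intros Om_has_px refl)+ simp

lemma pt_D: "pt D x t = (s t)\<^sup>2 + 4 * (px f x t)\<^sup>2
    + (8 * k + 2 * u x t) * (f x t)\<^sup>2 + (\<Sum>j = 1..n. (omega (lam j) (Phi j) k f x t)\<^sup>2)"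
  unfolding D_def by (rule pt_eqI, (rule derivative_eq_intros Om_has_pt e_has_deriv refl)+) simp

lemma D_has_pt: "((\<lambda>r. D x r) has_real_derivative pt D x t) (at t)"
  unfolding pt_D unfolding D_def by (rule derivative_eq_intros Om_has_pt e_has_deriv refl)+ simp

lemma px_cong_D:
  assumes "D x t \<noteq> 0" "\<And>y. D y t \<noteq> 0 \<Longrightarrow> a y t = b y t"
  shows "px a x t = px b x t"
proof -
  have "continuous_on UNIV (\<lambda>y. D y t)"
    using D_has_px DERIV_isCont by (blast intro: continuous_at_imp_continuous_on)
  then have "open {y. D y t \<noteq> 0}" by (rule open_Collect_neq) simp
  then have "\<forall>\<^sub>F y in nhds x. D y t \<noteq> 0"
    using eventually_nhds_in_open[OF \<open>open _\<close>] assms(1) by simp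
  then have "\<forall>\<^sub>F y in nhds x. a y t = b y t"
    by eventually_elim (rule assms(2))
  then show ?thesis unfolding px_def by (rule deriv_cong_ev) simp
qed

lemma pt_cong_D:
  assumes "D x t \<noteq> 0" "\<And>r. D x r \<noteq> 0 \<Longrightarrow> a x r = b x r"
  shows "pt a x t = pt b x t"
proof -
  have "continuous_on UNIV (\<lambda>r. D x r)"
    using D_has_pt DERIV_isCont by (blast intro: continuous_at_imp_continuous_on)
  then have "open {r. D x r \<noteq> 0}" by (rule open_Collect_neq) simp
  then have "\<forall>\<^sub>F r in nhds t. D x r \<noteq> 0"
    using eventually_nhds_in_open[OF \<open>open _\<close>] assms(1) by simp
  then have "\<forall>\<^sub>F r in nhds t. a x r = b x r"
    by eventually_elim (rule assms(2))
  then show ?thesis unfolding pt_def by (rule deriv_cong_ev) simp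
qed

lemma px_eq_on_D:
  assumes "D x t \<noteq> 0" "\<And>y. D y t \<noteq> 0 \<Longrightarrow> a y t = g y" "(g has_real_derivative c) (at x)"
  shows "px a x t = c"
  using px_cong_D[of x t a "\<lambda>y t. g y"] px_eqI[of "\<lambda>y t. g y"] assms by simp

lemma pt_eq_on_D:
  assumes "D x t \<noteq> 0" "\<And>r. D x r \<noteq> 0 \<Longrightarrow> a x r = g r" "(g has_real_derivative c) (at t)"
  shows "pt a x t = c"
  using pt_cong_D[of x t a "\<lambda>x r. g r"] pt_eqI[of "\<lambda>x r. g r"] assms by simp

text \<open>The entries of \<open>(f, f\<^sub>x)\<^sup>T (f, f\<^sub>x) / D\<close>. They are closed under \<open>px\<close> where \<open>D \<noteq> 0\<close>,
  so the \<open>x\<close>-derivatives of \<open>ubar\<close> stay polynomial in them.\<close>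

definition q00 :: fn2 where "q00 = (\<lambda>x t. (f x t)\<^sup>2 / D x t)"
definition q01 :: fn2 where "q01 = (\<lambda>x t. f x t * px f x t / D x t)"
definition q11 :: fn2 where "q11 = (\<lambda>x t. (px f x t)\<^sup>2 / D x t)"

lemma f_has_px: "((\<lambda>y. f y t) has_real_derivative px f x t) (at x)"
  by (rule smooth2_has_px[OF f_smooth])

lemma px_f_has_px: "((\<lambda>y. px f y t) has_real_derivative - (k + u x t) * f x t) (at x)"
  using smooth2_has_px[OF smooth2_px[OF f_smooth]] eigenfunction_px_px[OF f_eigen] by simp

lemma q00_has_px: "D x t \<noteq> 0 \<Longrightarrow>
    ((\<lambda>y. q00 y t) has_real_derivative 2 * q01 x t - (q00 x t)\<^sup>2) (at x)"
  unfolding q00_def q01_def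
  by (rule derivative_eq_intros f_has_px D_has_px refl | assumption)+
    (simp add: field_simps eval_nat_numeral)

lemma q01_has_px: "D x t \<noteq> 0 \<Longrightarrow>
    ((\<lambda>y. q01 y t) has_real_derivative q11 x t - (k + u x t) * q00 x t - q00 x t * q01 x t) (at x)"
  unfolding q00_def q01_def q11_def
  by (rule derivative_eq_intros f_has_px px_f_has_px D_has_px refl | assumption)+
    (simp add: field_simps eval_nat_numeral)

lemma q11_has_px: "D x t \<noteq> 0 \<Longrightarrow>
    ((\<lambda>y. q11 y t) has_real_derivative - 2 * (k + u x t) * q01 x t - q00 x t * q11 x t) (at x)"
  unfolding q00_def q01_def q11_def
  by (rule derivative_eq_intros f_has_px px_f_has_px D_has_px refl | assumption)+
    (simp add: field_simps eval_nat_numeral)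

lemma ubar_eq: "D x t \<noteq> 0 \<Longrightarrow> ubar x t = u x t + 4 * q01 x t - 2 * (q00 x t)\<^sup>2"
proof -
  assume "D x t \<noteq> 0"
  have "px (\<lambda>y r. ln \<bar>D y r\<bar>) y t = q00 y t" if "D y t \<noteq> 0" for y
    using DERIV_chain2[OF DERIV_ln_abs[OF that] D_has_px] by (intro px_eqI) (simp add: q00_def)
  then have "px (px (\<lambda>y r. ln \<bar>D y r\<bar>)) x t = px q00 x t"
    using \<open>D x t \<noteq> 0\<close> by (rule px_cong_D[rotated])
  also have "\<dots> = 2 * q01 x t - (q00 x t)\<^sup>2"
    by (rule px_eqI[of q00, OF q00_has_px[OF \<open>D x t \<noteq> 0\<close>]])
  finally show ?thesis by (simp add: ubar_def)
qed

lemma u_has_px: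
  "((\<lambda>y. u y t) has_real_derivative px u x t) (at x)"
  "((\<lambda>y. px u y t) has_real_derivative px (px u) x t) (at x)"
  "((\<lambda>y. px (px u) y t) has_real_derivative px (px (px u)) x t) (at x)"
  using u_smooth by (auto intro: smooth2_has_px smooth2_px)

lemma px_ubar:
  assumes "D x t \<noteq> 0"
  shows "px ubar x t = px u x t + 4 * q11 x t - 4 * (k + u x t) * q00 x t
    - 12 * q00 x t * q01 x t + 4 * (q00 x t)^3"
  by (rule px_eq_on_D[OF assms ubar_eq], (rule derivative_eq_intros u_has_px q00_has_px[OF assms]
      q01_has_px[OF assms] refl | assumption)+) (simp add: eval_nat_numeral; algebra)

lemma px_px_ubar:
  assumes "D x t \<noteq> 0"
  shows "px (px ubar) x t = px (px u) x t - 4 * px u x t * q00 x t - 16 * (k + u x t) * q01 x t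
    + 16 * (k + u x t) * (q00 x t)\<^sup>2 - 16 * q00 x t * q11 x t - 24 * (q01 x t)\<^sup>2
    + 48 * (q00 x t)\<^sup>2 * q01 x t - 12 * (q00 x t)^4"
  by (rule px_eq_on_D[OF assms px_ubar], (rule derivative_eq_intros u_has_px q00_has_px[OF assms]
      q01_has_px[OF assms] q11_has_px[OF assms] refl | assumption)+)
    (simp add: eval_nat_numeral; algebra)

lemma px_px_px_ubar:
  assumes "D x t \<noteq> 0"
  shows "px (px (px ubar)) x t = px (px (px u)) x t - 4 * px (px u) x t * q00 x t
    + 20 * px u x t * (q00 x t)\<^sup>2 - 24 * px u x t * q01 x t - 16 * (k + u x t) * q11 x t
    + 16 * (k + u x t)\<^sup>2 * q00 x t + 160 * (k + u x t) * q00 x t * q01 x t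
    - 80 * (k + u x t) * (q00 x t)^3 - 80 * q01 x t * q11 x t + 80 * (q00 x t)\<^sup>2 * q11 x t
    + 240 * q00 x t * (q01 x t)\<^sup>2 - 240 * (q00 x t)^3 * q01 x t + 48 * (q00 x t)^5"
  by (rule px_eq_on_D[OF assms px_px_ubar], (rule derivative_eq_intros u_has_px q00_has_px[OF assms]
      q01_has_px[OF assms] q11_has_px[OF assms] refl | assumption)+)
    (simp add: eval_nat_numeral; algebra)

lemma f_has_pt:
  "((\<lambda>r. f x r) has_real_derivative pt f x t) (at t)"
  "((\<lambda>r. px f x r) has_real_derivative pt (px f) x t) (at t)"
  using f_smooth by (auto intro: smooth2_has_pt smooth2_px)

lemma q00_has_pt: "D x t \<noteq> 0 \<Longrightarrow> ((\<lambda>r. q00 x r) has_real_derivative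
    (2 * f x t * pt f x t - q00 x t * pt D x t) / D x t) (at t)"
  unfolding q00_def
  by (rule derivative_eq_intros f_has_pt D_has_pt refl | assumption)+
    (simp add: field_simps eval_nat_numeral)

lemma q01_has_pt: "D x t \<noteq> 0 \<Longrightarrow> ((\<lambda>r. q01 x r) has_real_derivative
    (pt f x t * px f x t + f x t * pt (px f) x t - q01 x t * pt D x t) / D x t) (at t)"
  unfolding q01_def
  by (rule derivative_eq_intros f_has_pt D_has_pt refl | assumption)+
    (simp add: field_simps eval_nat_numeral)

lemma pt_ubar:
  assumes "D x t \<noteq> 0"
  shows "pt ubar x t = pt u x t
    + 4 * (pt f x t * px f x t + f x t * pt (px f) x t - q01 x t * pt D x t) / D x t
    - 4 * q00 x t * (2 * f x t * pt f x t - q00 x t * pt D x t) / D x t"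
  by (rule pt_eq_on_D[OF assms ubar_eq], (rule derivative_eq_intros smooth2_has_pt[OF u_smooth]
      q00_has_pt[OF assms] q01_has_pt[OF assms] refl | assumption)+)
    (use assms in \<open>simp add: eval_nat_numeral field_simps\<close>)

lemma darboux_has_px:
  assumes "((\<lambda>y. h y t) has_real_derivative px h x t) (at x)"
    and "((\<lambda>y. w y t) has_real_derivative f x t * h x t) (at x)" and "D x t \<noteq> 0"
  shows "((\<lambda>y. darboux w h y t) has_real_derivative px h x t - px f x t * w x t / D x t
    - (f x t)\<^sup>2 * h x t / D x t + (f x t)^3 * w x t / (D x t)\<^sup>2) (at x)"
  unfolding darboux_def
  by (rule derivative_eq_intros assms f_has_px D_has_px refl)+
    (use assms(3) in \<open>simp add: field_simps eval_nat_numeral\<close>)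

lemma darboux_schroedinger:
  assumes h: "\<And>y. ((\<lambda>y. h y t) has_real_derivative px h y t) (at y)"
      "\<And>y. ((\<lambda>y. px h y t) has_real_derivative - (\<mu> + u y t) * h y t) (at y)"
    and w: "\<And>y. ((\<lambda>y. w y t) has_real_derivative f y t * h y t) (at y)"
    and W: "(k - \<mu>) * w x t = Wr f h x t" and D: "D x t \<noteq> 0"
  shows "px (px (darboux w h)) x t + (\<mu> + ubar x t) * darboux w h x t = 0"
proof -
  have "px (px (darboux w h)) x t = - (\<mu> + ubar x t) * darboux w h x t"
    by (rule px_eq_on_D[where a = "px (darboux w h)", OF D px_eqI[of "darboux w h",
            OF darboux_has_px[where h = h and w = w, OF h(1) w]]],
        (rule derivative_eq_intros h w f_has_px px_f_has_px D_has_px D power_not_zero[OF D] refl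
          | assumption)+)
      (use D W in \<open>simp add: ubar_eq q00_def q01_def darboux_def Wr_def field_simps
        eval_nat_numeral; algebra\<close>)
  then show ?thesis by (simp add: algebra_simps)
qed

lemma px_px_cong_D:
  assumes "D x t \<noteq> 0" "\<And>y. D y t \<noteq> 0 \<Longrightarrow> a y t = b y t"
  shows "px (px a) x t = px (px b) x t"
  using assms by (intro px_cong_D) (auto intro: px_cong_D)

lemma omega_f_has_px:
  assumes "smooth2 h" "\<And>x t. px (px h) x t = - (\<mu> + u x t) * h x t" "\<mu> \<noteq> k"
  shows "((\<lambda>y. omega k f \<mu> h y t) has_real_derivative f x t * h x t) (at x)"
  using assms(3) by (intro omega_has_px[where c = "u x t"] f_smooth assms(1,2)
      eigenfunction_px_px[OF f_eigen]) simp

lemma darboux_omega_schroedinger: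
  assumes "smooth2 h" "\<And>x t. px (px h) x t = - (\<mu> + u x t) * h x t" "\<mu> \<noteq> k" "D x t \<noteq> 0"
  shows "px (px (darboux (omega k f \<mu> h) h)) x t
    + (\<mu> + ubar x t) * darboux (omega k f \<mu> h) h x t = 0"
proof (rule darboux_schroedinger)
  fix y
  show "((\<lambda>y. h y t) has_real_derivative px h y t) (at y)"
    using assms(1) by (rule smooth2_has_px)
  show "((\<lambda>y. px h y t) has_real_derivative - (\<mu> + u y t) * h y t) (at y)"
    using smooth2_has_px[OF smooth2_px[OF assms(1)]] assms(2) by simp
  show "((\<lambda>y. omega k f \<mu> h y t) has_real_derivative f y t * h y t) (at y)"
    using assms(1-3) by (rule omega_f_has_px)
  show "(k - \<mu>) * omega k f \<mu> h x t = Wr f h x t"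
    using assms(3) by (simp add: omega_def)
qed (rule assms(4))

lemma Phibar_Suc_n_eq: "D x t \<noteq> 0 \<Longrightarrow>
    Phibar (Suc n) x t = darboux (\<lambda>x t. s t * (D x t - 1)) (\<lambda>x t. s t * f x t) x t"
  by (simp add: Phibar_def darboux_def field_simps)

lemma Phibar_schroedinger:
  assumes j: "j \<in> {1..Suc n}" and D: "D x t \<noteq> 0"
  shows "px (px (Phibar j)) x t + (lam j + ubar x t) * Phibar j x t = 0"
proof (cases "j = Suc n")
  case True
  have sf: "px (\<lambda>x t. s t * f x t) y t = s t * px f y t" for y
    by (rule px_eqI) (rule DERIV_cmult[OF f_has_px])
  have "px (px (darboux (\<lambda>x t. s t * (D x t - 1)) (\<lambda>x t. s t * f x t))) x t
      + (k + ubar x t) * darboux (\<lambda>x t. s t * (D x t - 1)) (\<lambda>x t. s t * f x t) x t = 0"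
  proof (rule darboux_schroedinger)
    fix y
    show "((\<lambda>y. s t * f y t) has_real_derivative px (\<lambda>x t. s t * f x t) y t) (at y)"
      unfolding sf by (rule DERIV_cmult[OF f_has_px])
    show "((\<lambda>y. px (\<lambda>x t. s t * f x t) y t) has_real_derivative
        - (k + u y t) * (s t * f y t)) (at y)"
      unfolding sf using DERIV_cmult[OF px_f_has_px, of "s t"] by (simp add: algebra_simps)
    show "((\<lambda>y. s t * (D y t - 1)) has_real_derivative f y t * (s t * f y t)) (at y)"
      by (rule derivative_eq_intros D_has_px refl)+ (simp add: power2_eq_square)
    show "(k - k) * (s t * (D x t - 1)) = Wr f (\<lambda>x t. s t * f x t) x t"
      by (simp add: Wr_def sf)
  qed (rule D)
  moreover have "px (px (Phibar j)) x t
      = px (px (darboux (\<lambda>x t. s t * (D x t - 1)) (\<lambda>x t. s t * f x t))) x t"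
    using D True by (intro px_px_cong_D) (simp_all add: Phibar_Suc_n_eq)
  ultimately show ?thesis using True D by (simp add: Phibar_Suc_n_eq)
next
  case False
  with j have j: "j \<in> {1..n}" by auto
  then show ?thesis
    using darboux_omega_schroedinger[OF Phi_smooth px_px_Phi lam_ne_k D] False
    by (simp add: Phibar_def)
qed

lemma px_darboux_omega:
  assumes "smooth2 h" "\<And>x t. px (px h) x t = - (\<mu> + u x t) * h x t" "\<mu> \<noteq> k" "D x t \<noteq> 0"
  shows "px (darboux (omega k f \<mu> h) h) x t = px h x t - px f x t * omega k f \<mu> h x t / D x t
    - (f x t)\<^sup>2 * h x t / D x t + (f x t)^3 * omega k f \<mu> h x t / (D x t)\<^sup>2"
  by (rule px_eqI[of "darboux (omega k f \<mu> h) h", OF darboux_has_px[where h = h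
        and w = "omega k f \<mu> h" and x = x and t = t,
        OF smooth2_has_px[OF assms(1)] omega_f_has_px[OF assms(1-3)] assms(4)]])

lemma Wr_darboux_omega:
  assumes h1: "smooth2 h1" "\<And>x t. px (px h1) x t = - (\<mu>1 + u x t) * h1 x t" "\<mu>1 \<noteq> k"
    and h2: "smooth2 h2" "\<And>x t. px (px h2) x t = - (\<mu>2 + u x t) * h2 x t" "\<mu>2 \<noteq> k"
    and D: "D x t \<noteq> 0"
  shows "Wr (darboux (omega k f \<mu>1 h1) h1) (darboux (omega k f \<mu>2 h2) h2) x t
    = Wr h1 h2 x t - (\<mu>1 - \<mu>2) * omega k f \<mu>1 h1 x t * omega k f \<mu>2 h2 x t / D x t"
proof -
  have "(k - \<mu>1) * omega k f \<mu>1 h1 x t = Wr f h1 x t" "(k - \<mu>2) * omega k f \<mu>2 h2 x t = Wr f h2 x t"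
    using h1(3) h2(3) by (simp_all add: omega_def)
  moreover define r where "r = inverse (D x t)"
  moreover have "D x t * r = 1" using D by (simp add: r_def)
  ultimately show ?thesis
    unfolding Wr_def px_darboux_omega[OF h1 D] px_darboux_omega[OF h2 D]
    unfolding darboux_def divide_inverse power_inverse[symmetric] r_def[symmetric]
    by algebra
qed

lemma px_Phibar_Suc_n: "D x t \<noteq> 0 \<Longrightarrow>
    px (Phibar (Suc n)) x t = s t * (px f x t / D x t - (f x t)^3 / (D x t)\<^sup>2)"
  unfolding Phibar_def if_P[OF refl]
  by (rule px_eqI, (rule derivative_eq_intros f_has_px D_has_px refl | assumption)+)
    (simp add: field_simps eval_nat_numeral)

lemma omega_f_has_pt:
  assumes "eigenfunction \<mu> h" "\<mu> \<noteq> k"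
  shows "((\<lambda>r. omega k f \<mu> h x r) has_real_derivative 4 * px f x t * px h x t
    + (4 * k + 4 * \<mu> + 2 * u x t) * f x t * h x t
    + (\<Sum>j = 1..n. omega (lam j) (Phi j) k f x t * omega (lam j) (Phi j) \<mu> h x t)) (at t)"
  using DERIV_cdivide[OF Wr_has_pt_eigenfunction[OF f_eigen assms(1), of x t], of "k - \<mu>"] assms(2)
  by (simp add: omega_def)

lemma sources_darboux:
  assumes \<phi>: "eigenfunction \<mu> \<phi>" and \<mu>: "\<mu> \<notin> lam ` {1..Suc n}" and D: "D x t \<noteq> 0"
  shows "(\<Sum>j = 1..n. Phibar j x t / (lam j - \<mu>) * Wr (Phibar j) (darboux (omega k f \<mu> \<phi>) \<phi>) x t)
    = (\<Sum>j = 1..n. Phi j x t * omega (lam j) (Phi j) \<mu> \<phi> x t)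
      - omega k f \<mu> \<phi> x t / D x t * (\<Sum>j = 1..n. Phi j x t * omega (lam j) (Phi j) k f x t)
      - f x t / D x t * (\<Sum>j = 1..n. omega (lam j) (Phi j) k f x t * omega (lam j) (Phi j) \<mu> \<phi> x t)
      + f x t * omega k f \<mu> \<phi> x t / (D x t)\<^sup>2 * (\<Sum>j = 1..n. (omega (lam j) (Phi j) k f x t)\<^sup>2)"
    (is "?S = _")
proof -
  have \<mu>k: "\<mu> \<noteq> k" using \<mu> by force
  have summand: "Phibar j x t / (lam j - \<mu>) * Wr (Phibar j) (darboux (omega k f \<mu> \<phi>) \<phi>) x t
    = Phi j x t * omega (lam j) (Phi j) \<mu> \<phi> x t
      - omega k f \<mu> \<phi> x t / D x t * (Phi j x t * omega (lam j) (Phi j) k f x t)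
      - f x t / D x t * (omega (lam j) (Phi j) k f x t * omega (lam j) (Phi j) \<mu> \<phi> x t)
      + f x t * omega k f \<mu> \<phi> x t / (D x t)\<^sup>2 * (omega (lam j) (Phi j) k f x t)\<^sup>2"
    if j: "j \<in> {1..n}" for j
  proof -
    have "lam j \<noteq> \<mu>" using \<mu> j by force
    have Wr_eq: "Wr (Phibar j) (darboux (omega k f \<mu> \<phi>) \<phi>) x t = Wr (Phi j) \<phi> x t
        - (lam j - \<mu>) * omega (lam j) (Phi j) k f x t * omega k f \<mu> \<phi> x t / D x t"
      using Wr_darboux_omega[OF Phi_smooth[OF j] px_px_Phi[OF j] lam_ne_k[OF j]
          eigenfunction_smooth[OF \<phi>] eigenfunction_px_px[OF \<phi>] \<mu>k D] j
      by (simp add: Phibar_def omega_commute[of k f "lam j" "Phi j"])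
    have Phibar_eq: "Phibar j x t = Phi j x t - f x t * omega (lam j) (Phi j) k f x t / D x t"
      using j by (simp add: Phibar_def darboux_def omega_commute[of k f "lam j" "Phi j"])
    have Wr_Phi: "Wr (Phi j) \<phi> x t = (lam j - \<mu>) * omega (lam j) (Phi j) \<mu> \<phi> x t"
      using \<open>lam j \<noteq> \<mu>\<close> by (simp add: omega_def)
    show ?thesis
      unfolding Wr_eq Phibar_eq Wr_Phi using \<open>lam j \<noteq> \<mu>\<close> D
      by (simp add: field_simps power2_eq_square)
  qed
  have "?S = (\<Sum>j = 1..n. Phi j x t * omega (lam j) (Phi j) \<mu> \<phi> x t
      - omega k f \<mu> \<phi> x t / D x t * (Phi j x t * omega (lam j) (Phi j) k f x t)
      - f x t / D x t * (omega (lam j) (Phi j) k f x t * omega (lam j) (Phi j) \<mu> \<phi> x t)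
      + f x t * omega k f \<mu> \<phi> x t / (D x t)\<^sup>2 * (omega (lam j) (Phi j) k f x t)\<^sup>2)"
    by (rule sum.cong[OF refl summand])
  then show ?thesis by (simp add: sum.distrib sum_subtractf sum_distrib_left)
qed

lemma darboux_lax_pt:
  assumes \<phi>: "eigenfunction \<mu> \<phi>" and \<mu>: "\<mu> \<notin> lam ` {1..Suc n}" and D: "D x t \<noteq> 0"
  shows "pt (darboux (omega k f \<mu> \<phi>) \<phi>) x t
    = Aop (Suc n) lam \<mu> ubar Phibar (darboux (omega k f \<mu> \<phi>) \<phi>) x t"
proof -
  have \<mu>k: "\<mu> \<noteq> k" using \<mu> by force
  note s\<phi> = eigenfunction_smooth[OF \<phi>] and \<phi>xx = eigenfunction_px_px[OF \<phi>]
  have lhs: "pt (darboux (omega k f \<mu> \<phi>) \<phi>) x t = pt \<phi> x t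
    - (pt f x t * omega k f \<mu> \<phi> x t + f x t * (4 * px f x t * px \<phi> x t
        + (4 * k + 4 * \<mu> + 2 * u x t) * f x t * \<phi> x t
        + (\<Sum>j = 1..n. omega (lam j) (Phi j) k f x t * omega (lam j) (Phi j) \<mu> \<phi> x t))) / D x t
    + f x t * omega k f \<mu> \<phi> x t * pt D x t / (D x t)\<^sup>2"
    unfolding darboux_def
    by (rule pt_eqI, (rule derivative_eq_intros smooth2_has_pt[OF s\<phi>] f_has_pt
        omega_f_has_pt[OF \<phi> \<mu>k] D_has_pt D refl)+) (use D in \<open>simp add: field_simps eval_nat_numeral\<close>)
  have "Aop (Suc n) lam \<mu> ubar Phibar (darboux (omega k f \<mu> \<phi>) \<phi>) x t
    = px ubar x t * darboux (omega k f \<mu> \<phi>) \<phi> x t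
      + (4 * \<mu> - 2 * ubar x t) * px (darboux (omega k f \<mu> \<phi>) \<phi>) x t
      + (\<Sum>j = 1..n. Phibar j x t / (lam j - \<mu>) * Wr (Phibar j) (darboux (omega k f \<mu> \<phi>) \<phi>) x t)
      + Phibar (Suc n) x t / (k - \<mu>) * (Phibar (Suc n) x t * px (darboux (omega k f \<mu> \<phi>) \<phi>) x t
          - px (Phibar (Suc n)) x t * darboux (omega k f \<mu> \<phi>) \<phi> x t)"
    by (simp add: Aop_def Wr_def)
  also have "\<dots> = pt (darboux (omega k f \<mu> \<phi>) \<phi>) x t"
  proof -
    have "(k - \<mu>) * omega k f \<mu> \<phi> x t = f x t * px \<phi> x t - px f x t * \<phi> x t"
      using \<mu>k by (simp add: omega_def Wr_def)
    moreover define r where "r = inverse (D x t)"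
    moreover have "D x t * r = 1" using D by (simp add: r_def)
    moreover have "(k - \<mu>) * inverse (k - \<mu>) = 1" using \<mu>k by simp
    ultimately show ?thesis
      unfolding lhs sources_darboux[OF \<phi> \<mu> D] px_darboux_omega[OF s\<phi> \<phi>xx \<mu>k D]
        px_Phibar_Suc_n[OF D] px_ubar[OF D] ubar_eq[OF D] eigenfunction_pt[OF \<phi>]
        eigenfunction_pt[OF f_eigen] pt_D
      unfolding Phibar_def if_P[OF refl] darboux_def q00_def q01_def q11_def
        divide_inverse power_inverse[symmetric] r_def[symmetric]
      by algebra
  qed
  finally show ?thesis ..
qed

lemma sources_darboux_kdv:
  assumes D: "D x t \<noteq> 0"
  shows "(\<Sum>j = 1..n. Phibar j x t * px (Phibar j) x t)
    = (\<Sum>j = 1..n. Phi j x t * px (Phi j) x t)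
      - px f x t / D x t * (\<Sum>j = 1..n. Phi j x t * omega (lam j) (Phi j) k f x t)
      - f x t / D x t * (\<Sum>j = 1..n. px (Phi j) x t * omega (lam j) (Phi j) k f x t)
      - (f x t)\<^sup>2 / D x t * (\<Sum>j = 1..n. (Phi j x t)\<^sup>2)
      + 2 * (f x t)^3 / (D x t)\<^sup>2 * (\<Sum>j = 1..n. Phi j x t * omega (lam j) (Phi j) k f x t)
      + (f x t * px f x t / (D x t)\<^sup>2 - (f x t)^4 / (D x t)^3)
        * (\<Sum>j = 1..n. (omega (lam j) (Phi j) k f x t)\<^sup>2)"
    (is "?S = _")
proof -
  have summand: "Phibar j x t * px (Phibar j) x t = Phi j x t * px (Phi j) x t
      - px f x t / D x t * (Phi j x t * omega (lam j) (Phi j) k f x t)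
      - f x t / D x t * (px (Phi j) x t * omega (lam j) (Phi j) k f x t)
      - (f x t)\<^sup>2 / D x t * (Phi j x t)\<^sup>2
      + 2 * (f x t)^3 / (D x t)\<^sup>2 * (Phi j x t * omega (lam j) (Phi j) k f x t)
      + (f x t * px f x t / (D x t)\<^sup>2 - (f x t)^4 / (D x t)^3)
        * (omega (lam j) (Phi j) k f x t)\<^sup>2"
    if j: "j \<in> {1..n}" for j
  proof -
    have px_j: "px (Phibar j) x t = px (Phi j) x t - px f x t * omega (lam j) (Phi j) k f x t / D x t
        - (f x t)\<^sup>2 * Phi j x t / D x t + (f x t)^3 * omega (lam j) (Phi j) k f x t / (D x t)\<^sup>2"
      using px_darboux_omega[OF Phi_smooth[OF j] px_px_Phi[OF j] lam_ne_k[OF j] D] j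
      by (simp add: Phibar_def omega_commute[of k f "lam j" "Phi j"])
    have Phibar_j: "Phibar j x t = Phi j x t - f x t * omega (lam j) (Phi j) k f x t / D x t"
      using j by (simp add: Phibar_def darboux_def omega_commute[of k f "lam j" "Phi j"])
    show ?thesis
      unfolding px_j Phibar_j using D by (simp add: field_simps eval_nat_numeral)
  qed
  have "?S = (\<Sum>j = 1..n. Phi j x t * px (Phi j) x t
      - px f x t / D x t * (Phi j x t * omega (lam j) (Phi j) k f x t)
      - f x t / D x t * (px (Phi j) x t * omega (lam j) (Phi j) k f x t)
      - (f x t)\<^sup>2 / D x t * (Phi j x t)\<^sup>2
      + 2 * (f x t)^3 / (D x t)\<^sup>2 * (Phi j x t * omega (lam j) (Phi j) k f x t)
      + (f x t * px f x t / (D x t)\<^sup>2 - (f x t)^4 / (D x t)^3)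
        * (omega (lam j) (Phi j) k f x t)\<^sup>2)"
    by (rule sum.cong[OF refl summand])
  then show ?thesis by (simp add: sum.distrib sum_subtractf sum_distrib_left)
qed

lemma darboux_kdv:
  assumes D: "D x t \<noteq> 0"
  shows "pt ubar x t + 6 * ubar x t * px ubar x t + px (px (px ubar)) x t
    + 4 * (\<Sum>j = 1..Suc n. Phibar j x t * px (Phibar j) x t) = 0"
proof -
  have split: "(\<Sum>j = 1..n. px (Phi j) x t * omega (lam j) (Phi j) k f x t + (Phi j x t)\<^sup>2 * f x t)
    = (\<Sum>j = 1..n. px (Phi j) x t * omega (lam j) (Phi j) k f x t)
      + (\<Sum>j = 1..n. (Phi j x t)\<^sup>2) * f x t"
    by (simp add: sum.distrib sum_distrib_right)
  have sum_Suc: "(\<Sum>j = 1..Suc n. Phibar j x t * px (Phibar j) x t)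
    = (\<Sum>j = 1..n. Phibar j x t * px (Phibar j) x t) + Phibar (Suc n) x t * px (Phibar (Suc n)) x t"
    by simp
  define r where "r = inverse (D x t)"
  show ?thesis
    unfolding sum_Suc sources_darboux_kdv[OF D] px_Phibar_Suc_n[OF D] pt_ubar[OF D] px_ubar[OF D]
      px_px_px_ubar[OF D] ubar_eq[OF D] pt_u eigenfunction_pt[OF f_eigen]
      eigenfunction_pt_px[OF f_eigen] split pt_D
    unfolding Phibar_def if_P[OF refl] q00_def q01_def q11_def
      divide_inverse power_inverse[symmetric] r_def[symmetric]
    by algebra
qed

lemma darboux_lax_sys_on:
  assumes "\<mu> \<notin> lam ` {1..Suc n}" "smooth2 \<phi>" "lax_sys_on UNIV n lam u Phi \<mu> \<phi>"
  shows "lax_sys_on {(x, t). D x t \<noteq> 0} (Suc n) lam ubar Phibar \<mu> (darboux (omega k f \<mu> \<phi>) \<phi>)"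
  unfolding lax_sys_on_def
proof (intro allI impI conjI)
  fix x t assume "(x, t) \<in> {(x, t). D x t \<noteq> 0}"
  then have D: "D x t \<noteq> 0" by simp
  have \<phi>: "eigenfunction \<mu> \<phi>" using assms by (auto simp: eigenfunction_def)
  have "\<mu> \<noteq> k" using assms(1) by force
  with D show "px (px (darboux (omega k f \<mu> \<phi>) \<phi>)) x t
      + (\<mu> + ubar x t) * darboux (omega k f \<mu> \<phi>) \<phi> x t = 0"
    by (intro darboux_omega_schroedinger assms(2) eigenfunction_px_px[OF \<phi>])
  show "pt (darboux (omega k f \<mu> \<phi>) \<phi>) x t
      = Aop (Suc n) lam \<mu> ubar Phibar (darboux (omega k f \<mu> \<phi>) \<phi>) x t"
    using \<phi> assms(1) D by (rule darboux_lax_pt)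
qed

lemma darboux_kdvs_on: "kdvs_on {(x, t). D x t \<noteq> 0} (Suc n) lam ubar Phibar"
  unfolding kdvs_on_def using darboux_kdv Phibar_schroedinger by auto

end

theorem theorem2p1:
  fixes n :: nat and lam :: "nat \<Rightarrow> real" and u :: fn2 and Phi :: "nat \<Rightarrow> fn2"
    and F :: fn3 and e s :: "real \<Rightarrow> real"
    and f \<omega>ff D ubar :: fn2 and Phibar :: "nat \<Rightarrow> fn2" and U :: "(real \<times> real) set"
  assumes distinct: "inj_on lam {1..Suc n}"
    and u_smooth: "smooth2 u"
    and Phi_smooth: "\<forall>j \<in> {1..n}. smooth2 (Phi j)"
    and kdvs: "kdvs_on UNIV n lam u Phi"
    and family: "\<exists>\<delta>>0. smooth3_on (ball (lam (Suc n)) \<delta>) F \<and>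
        (\<forall>\<xi> \<in> ball (lam (Suc n)) \<delta>. \<xi> \<notin> lam ` {1..n} \<longrightarrow>
            smooth2 (F \<xi>) \<and> lax_sys_on UNIV n lam u Phi \<xi> (F \<xi>))"
    and e_diff: "\<forall>t. e differentiable at t"
    and s_smooth: "smooth1 s"
    and s_sqrt: "\<forall>t. (s t)\<^sup>2 = deriv e t"
  defines "f \<equiv> F (lam (Suc n))"
    and "\<omega>ff \<equiv> (\<lambda>x t. - Wr f (pxi3 F (lam (Suc n))) x t)"
    and "D \<equiv> (\<lambda>x t. e t + \<omega>ff x t)"
    and "U \<equiv> {(x, t). D x t \<noteq> 0}"
    and "ubar \<equiv> (\<lambda>x t. u x t + 2 * px (px (\<lambda>y r. ln \<bar>D y r\<bar>)) x t)"
    and "Phibar \<equiv> (\<lambda>j. if j = Suc n then (\<lambda>x t. s t * f x t / D x t)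
             else (\<lambda>x t. Phi j x t
                     - f x t * (Wr f (Phi j) x t / (lam (Suc n) - lam j)) / D x t))"
  shows "(\<forall>(lm::real) \<phi>. lm \<notin> lam ` {1..Suc n} \<longrightarrow> smooth2 \<phi> \<longrightarrow>
            lax_sys_on UNIV n lam u Phi lm \<phi> \<longrightarrow>
            lax_sys_on U (Suc n) lam ubar Phibar lm
              (\<lambda>x t. \<phi> x t - f x t * (Wr f \<phi> x t / (lam (Suc n) - lm)) / D x t))
         \<and> kdvs_on U (Suc n) lam ubar Phibar"
proof -
  let ?k = "lam (Suc n)"
  interpret kdv_sources n lam u Phi
    using u_smooth Phi_smooth kdvs by unfold_locales auto
  obtain \<delta> where \<delta>: "smooth3_on (ball ?k \<delta>) F" "\<delta> > 0"
    "\<forall>\<xi> \<in> ball ?k \<delta>. \<xi> \<notin> lam ` {1..n} \<longrightarrow> smooth2 (F \<xi>) \<and> lax_sys_on UNIV n lam u Phi \<xi> (F \<xi>)"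
    using family by blast
  have "?k \<notin> lam ` {1..n}" using distinct by (auto dest: inj_onD)
  then obtain S where S: "open S" "?k \<in> S" "smooth3_on S F" "\<And>\<xi>. \<xi> \<in> S \<Longrightarrow> eigenfunction \<xi> (F \<xi>)"
    using eigenfunction_family_nhd[OF \<delta>(1,2) _ \<delta>(3)] by blast
  have "(e has_real_derivative (s t)\<^sup>2) (at t)" for t
    using e_diff s_sqrt DERIV_deriv_iff_real_differentiable by metis
  then interpret K: binary_darboux n lam u Phi f \<omega>ff e s
    unfolding f_def \<omega>ff_def
    using S(4)[OF S(2)] omega_self_has_px[OF S] omega_self_has_pt[OF S]
    by unfold_locales
  have D: "K.D = D" unfolding K.D_def D_def ..
  have "{(x, t). K.D x t \<noteq> 0} = U" "K.ubar = ubar" "K.Phibar = Phibar"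
    and "K.darboux (omega ?k f lm \<phi>) \<phi>
      = (\<lambda>x t. \<phi> x t - f x t * (Wr f \<phi> x t / (?k - lm)) / D x t)" for lm \<phi>
    unfolding U_def K.ubar_def ubar_def K.Phibar_def[abs_def] Phibar_def K.darboux_def omega_def D
    by (rule refl)+
  with K.darboux_lax_sys_on K.darboux_kdvs_on show ?thesis by auto
qed

end
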